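(* If $P$ is a non-disjunctive labelled program (over a finite signature), then $\mathit{SM}(P)=\mathit{JM}(P)$.
   Context: Fix a finite non-empty set $\mathit{At}$ of propositional atoms. A labelled rule $r$ has the form $\ell : p_1 \vee \dots \vee p_m \leftarrow q_1 \wedge \dots \wedge q_n \wedge \neg s_1 \wedge \dots \wedge \neg s_j \wedge \neg\neg t_1 \wedge \dots \wedge \neg\neg t_k$ with $m,n,j,k \ge 0$ and atoms in $\mathit{At}$; $\mathit{Lb}(r)=\ell$, $\mathit{Hd}(r)=p_1\vee\dots\vee p_m$, $H(r)=\{p_1,\dots,p_m\}$, $\mathit{Bd}(r)$ is the whole antecedent, $\mathit{Bd}^+(r)=q_1\wedge\dots\wedge q_n$, $B^+(r)=\{q_1,\dots,q_n\}$, $\mathit{Bd}^-(r)=\neg s_1 \wedge \dots \wedge \neg s_j \wedge \neg\neg t_1 \wedge \dots \wedge \neg\neg t_k$. Empty disjunction is $\bot$, empty conjunction $\top$. A labelled program $P$ is a finite set of labelled rules with no repeated label; $\mathit{Lb}(P)$ is its set of labels. $P$ is non-disjunctive if $|H(r)|\le 1$ for every $r\in P$. An interpretation $I\subseteq\mathit{At}$ is a (classical) model of $P$ if $I\models \mathit{Bd}(r)\to\mathit{Hd}(r)$ for every $r\in P$. The reduct is $P^I=\{\ \mathit{Lb}(r): \mathit{Hd}(r) \leftarrow \mathit{Bd}^+(r) \mid r \in P,\ I \models \mathit{Bd}^-(r)\ \}$. $I$ is a stable model of $P$ if $I$ is a $\subseteq$-minimal classical model of $P^I$; $\mathit{SM}(P)$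 is the set of stable models. $\mathit{Sup}(I,P,p)=\{ r \in P \mid p \in H(r),\ I \models \mathit{Bd}(r)\}$. A support graph of a model $I$ under $P$ is a directed graph $G=\langle I,E,\lambda\rangle$ with vertex set $I$, edges $E\subseteq I\times I$ and a labelling $\lambda: I\to \mathit{Lb}(P)$ such that (i) $\lambda$ is injective, and (ii) for every $p\in I$, the rule $r\in P$ with $\mathit{Lb}(r)=\lambda(p)$ satisfies $r\in \mathit{Sup}(I,P,p)$ and $B^+(r)=\{q \mid (q,p)\in E\}$. An explanation is an acyclic support graph. A classical model $I$ of $P$ is a justified model if some explanation of $I$ under $P$ exists; $\mathit{JM}(P)$ is the set of justified models. *)

theory Defs
  imports Main
begin

text \<open>A rule
  l : p1 v ... v pm <- q1 & ... & qn & not s1 & ... & not sj & not not t1 & ... & not not tk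
  is represented by its label, head atoms H(r), positive body B+(r),
  negated atoms {s_i} and doubly negated atoms {t_i}.\<close>

record ('a, 'l) lrule =
  lbl  :: 'l
  hd   :: "'a set"
  pos  :: "'a set"
  neg  :: "'a set"
  nneg :: "'a set"

definition labelled_program :: "('a::finite, 'l) lrule set \<Rightarrow> bool" where
  "labelled_program P \<longleftrightarrow> finite P \<and> inj_on lbl P"

definition non_disjunctive :: "('a, 'l) lrule set \<Rightarrow> bool" where
  "non_disjunctive P \<longleftrightarrow> (\<forall>r\<in>P. card (hd r) \<le> 1)"

definition sat_neg_body :: "'a set \<Rightarrow> ('a, 'l) lrule \<Rightarrow> bool" where
  "sat_neg_body I r \<longleftrightarrow> neg r \<inter> I = {} \<and> nneg r \<subseteq> I"

definition sat_body :: "'a set \<Rightarrow> ('a, 'l) lrule \<Rightarrow> bool" where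
  "sat_body I r \<longleftrightarrow> pos r \<subseteq> I \<and> sat_neg_body I r"

definition sat_head :: "'a set \<Rightarrow> ('a, 'l) lrule \<Rightarrow> bool" where
  "sat_head I r \<longleftrightarrow> hd r \<inter> I \<noteq> {}"

definition is_model :: "('a, 'l) lrule set \<Rightarrow> 'a set \<Rightarrow> bool" where
  "is_model P I \<longleftrightarrow> (\<forall>r\<in>P. sat_body I r \<longrightarrow> sat_head I r)"

definition reduct :: "('a, 'l) lrule set \<Rightarrow> 'a set \<Rightarrow> ('a, 'l) lrule set" where
  "reduct P I = {\<lparr>lbl = lbl r, hd = hd r, pos = pos r, neg = {}, nneg = {}\<rparr> | r. r \<in> P \<and> sat_neg_body I r}"

definition stable_model :: "('a, 'l) lrule set \<Rightarrow> 'a set \<Rightarrow> bool" where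
  "stable_model P I \<longleftrightarrow> is_model (reduct P I) I \<and> (\<forall>J. J \<subset> I \<longrightarrow> \<not> is_model (reduct P I) J)"

definition SM :: "('a, 'l) lrule set \<Rightarrow> 'a set set" where
  "SM P = {I. stable_model P I}"

definition Sup_rules :: "'a set \<Rightarrow> ('a, 'l) lrule set \<Rightarrow> 'a \<Rightarrow> ('a, 'l) lrule set" where
  "Sup_rules I P p = {r \<in> P. p \<in> hd r \<and> sat_body I r}"

definition support_graph :: "('a, 'l) lrule set \<Rightarrow> 'a set \<Rightarrow> ('a \<times> 'a) set \<Rightarrow> ('a \<Rightarrow> 'l) \<Rightarrow> bool" where
  "support_graph P I E lam \<longleftrightarrow>
     E \<subseteq> I \<times> I \<and> lam ` I \<subseteq> lbl ` P \<and> inj_on lam I \<and>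
     (\<forall>p\<in>I. \<exists>r\<in>P. lbl r = lam p \<and> r \<in> Sup_rules I P p \<and> pos r = {q. (q, p) \<in> E})"

definition explanation :: "('a, 'l) lrule set \<Rightarrow> 'a set \<Rightarrow> ('a \<times> 'a) set \<Rightarrow> ('a \<Rightarrow> 'l) \<Rightarrow> bool" where
  "explanation P I E lam \<longleftrightarrow> support_graph P I E lam \<and> acyclic E"

definition justified_model :: "('a, 'l) lrule set \<Rightarrow> 'a set \<Rightarrow> bool" where
  "justified_model P I \<longleftrightarrow> is_model P I \<and> (\<exists>E lam. explanation P I E lam)"

definition JM :: "('a, 'l) lrule set \<Rightarrow> 'a set set" where
  "JM P = {I. justified_model P I}"

end

theory Submission
  imports Defs
begin

text \<open>For a non-disjunctive program the reduct \<open>P\<^sup>I\<close> is a Horn program. If \<open>I\<close> is stable, it is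
  therefore reached by iterating the immediate-consequence operator of \<open>P\<^sup>I\<close> from the empty set,
  and the stage at which an atom first appears is a rank that strictly decreases along positive
  bodies; the rules deriving the atoms then form an explanation, whose labelling is injective
  because distinct atoms are derived by rules with distinct heads. Conversely, an explanation is a
  well-founded support graph, and induction along its edges shows that every model of \<open>P\<^sup>I\<close>
  contains \<open>I\<close>, which is the minimality required of a stable model.\<close>

lemma is_model_reduct_iff:
  "is_model (reduct P I) J \<longleftrightarrow> (\<forall>r\<in>P. sat_neg_body I r \<longrightarrow> pos r \<subseteq> J \<longrightarrow> hd r \<inter> J \<noteq> {})"
  unfolding is_model_def reduct_def sat_body_def sat_neg_body_def sat_head_def by fastforce

lemma is_model_reduct_self_iff: "is_model (reduct P I) I \<longleftrightarrow> is_model P I"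
  unfolding is_model_reduct_iff unfolding is_model_def sat_body_def sat_head_def by blast

lemma non_disjunctive_hd_eq:
  fixes P :: "('a::finite, 'l) lrule set"
  assumes "non_disjunctive P" "r \<in> P" "p \<in> hd r"
  shows "hd r = {p}"
  using assms card_le_Suc0_iff_eq[of "hd r"] unfolding non_disjunctive_def by auto

lemma support_graph_subset_reduct_model:
  fixes P :: "('a::finite, 'l) lrule set"
  assumes nd: "non_disjunctive P" and sg: "support_graph P I E lam" and "wf E"
    and J: "is_model (reduct P I) J"
  shows "I \<subseteq> J"
proof -
  have "p \<in> I \<longrightarrow> p \<in> J" for p
    using \<open>wf E\<close>
  proof (induction p rule: wf_induct_rule)
    case (less p)
    show ?case
    proof
      assume "p \<in> I"
      then obtain r where r: "r \<in> P" "r \<in> Sup_rules I P p" "pos r = {q. (q, p) \<in> E}"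
        using sg unfolding support_graph_def by blast
      have "pos r \<subseteq> J"
        using r(3) less sg unfolding support_graph_def by blast
      moreover have "sat_neg_body I r" "p \<in> hd r"
        using r(2) unfolding Sup_rules_def sat_body_def by auto
      ultimately have "hd r \<inter> J \<noteq> {}"
        using J r(1) unfolding is_model_reduct_iff by blast
      with non_disjunctive_hd_eq[OF nd r(1) \<open>p \<in> hd r\<close>] show "p \<in> J" by auto
    qed
  qed
  then show ?thesis by blast
qed

lemma justified_model_imp_stable_model:
  fixes P :: "('a::finite, 'l) lrule set"
  assumes "non_disjunctive P" "justified_model P I"
  shows "stable_model P I"
proof -
  obtain E lam where "is_model P I" "support_graph P I E lam" "acyclic E"
    using assms(2) unfolding justified_model_def explanation_def by blast
  moreover from \<open>acyclic E\<close> have "wf E" by (simp add: finite_acyclic_wf)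
  ultimately show ?thesis
    using support_graph_subset_reduct_model[OF assms(1)]
    unfolding stable_model_def is_model_reduct_self_iff by blast
qed

definition immediate_consequence :: "('a, 'l) lrule set \<Rightarrow> 'a set \<Rightarrow> 'a set \<Rightarrow> 'a set" where
  "immediate_consequence P I S = {p. \<exists>r\<in>P. sat_neg_body I r \<and> hd r = {p} \<and> pos r \<subseteq> S}"

lemma mono_immediate_consequence: "mono (immediate_consequence P I)"
  unfolding mono_def immediate_consequence_def by blast

lemma immediate_consequence_subset_if_reduct_model:
  assumes "is_model (reduct P I) J"
  shows "immediate_consequence P I J \<subseteq> J"
  using assms unfolding is_model_reduct_iff immediate_consequence_def by fastforce

lemma reduct_model_if_immediate_consequence_subset:
  fixes P :: "('a::finite, 'l) lrule set"
  assumes nd: "non_disjunctive P" and I: "is_model (reduct P I) I" and "J \<subseteq> I"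
    and closed: "immediate_consequence P I J \<subseteq> J"
  shows "is_model (reduct P I) J"
  unfolding is_model_reduct_iff
proof (intro ballI impI)
  fix r assume r: "r \<in> P" "sat_neg_body I r" "pos r \<subseteq> J"
  then obtain p where "p \<in> hd r"
    using I \<open>J \<subseteq> I\<close> unfolding is_model_reduct_iff by blast
  then have "p \<in> immediate_consequence P I J"
    using non_disjunctive_hd_eq[OF nd r(1)] r unfolding immediate_consequence_def by blast
  with closed \<open>p \<in> hd r\<close> show "hd r \<inter> J \<noteq> {}" by blast
qed

lemma immediate_consequence_iterate_subset:
  assumes "is_model (reduct P I) I"
  shows "(immediate_consequence P I ^^ n) {} \<subseteq> I"
  using Kleene_iter_lpfp[OF mono_immediate_consequence
      immediate_consequence_subset_if_reduct_model[OF assms]]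
  by (simp add: bot_set_def)

lemma funpow_empty_fixpoint_exists:
  fixes f :: "'a::finite set \<Rightarrow> 'a set"
  assumes "mono f"
  shows "\<exists>k. f ((f ^^ k) {}) = (f ^^ k) {}"
proof -
  have "mono (\<lambda>i. (f ^^ i) {})"
    using mono_funpow[OF assms] by (simp add: bot_set_def)
  then obtain N where "\<forall>n\<ge>N. (f ^^ N) {} = (f ^^ n) {}"
    using finite_mono_remains_stable_implies_strict_prefix[of "\<lambda>i. (f ^^ i) {}"] by auto
  then show ?thesis by (metis funpow.simps(2) comp_apply le_SucI order_refl)
qed

lemma stable_model_eq_immediate_consequence_iterate:
  fixes P :: "('a::finite, 'l) lrule set"
  assumes nd: "non_disjunctive P" and "stable_model P I"
  shows "\<exists>k. (immediate_consequence P I ^^ k) {} = I"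
proof -
  let ?T = "immediate_consequence P I"
  have I: "is_model (reduct P I) I" and min: "\<And>J. J \<subset> I \<Longrightarrow> \<not> is_model (reduct P I) J"
    using assms(2) unfolding stable_model_def by auto
  obtain k where fixpoint: "?T ((?T ^^ k) {}) = (?T ^^ k) {}"
    using funpow_empty_fixpoint_exists[OF mono_immediate_consequence] by blast
  have "(?T ^^ k) {} \<subseteq> I"
    using immediate_consequence_iterate_subset[OF I] .
  moreover from this have "is_model (reduct P I) ((?T ^^ k) {})"
    using reduct_model_if_immediate_consequence_subset[OF nd I] fixpoint by simp
  ultimately show ?thesis
    using min by blast
qed

lemma stable_model_ranked_support:
  fixes P :: "('a::finite, 'l) lrule set"
  assumes nd: "non_disjunctive P" and "stable_model P I"
  shows "\<exists>rk :: 'a \<Rightarrow> nat. \<forall>p\<in>I. \<exists>r\<in>P. sat_body I r \<and> hd r = {p} \<and> (\<forall>q\<in>pos r. rk q < rk p)"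
proof -
  let ?T = "immediate_consequence P I"
  have I: "is_model (reduct P I) I"
    using assms(2) unfolding stable_model_def by blast
  obtain k where k: "(?T ^^ k) {} = I"
    using stable_model_eq_immediate_consequence_iterate[OF assms] by blast
  define rk where "rk p = (LEAST n. p \<in> (?T ^^ n) {})" for p
  have "\<exists>r\<in>P. sat_body I r \<and> hd r = {p} \<and> (\<forall>q\<in>pos r. rk q < rk p)" if "p \<in> I" for p
  proof -
    have "p \<in> (?T ^^ rk p) {}"
      unfolding rk_def using k that by (metis LeastI)
    then obtain m where m: "rk p = Suc m" "p \<in> ?T ((?T ^^ m) {})"
      by (cases "rk p") auto
    then obtain r where r: "r \<in> P" "sat_neg_body I r" "hd r = {p}" "pos r \<subseteq> (?T ^^ m) {}"
      unfolding immediate_consequence_def by blast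
    have "\<forall>q\<in>pos r. rk q < rk p"
      using r(4) m(1) unfolding rk_def by (metis Least_le less_Suc_eq_le subsetD)
    moreover have "sat_body I r"
      using r(2,4) immediate_consequence_iterate_subset[OF I] unfolding sat_body_def by blast
    ultimately show ?thesis
      using r(1,3) by blast
  qed
  then show ?thesis by blast
qed

lemma explanation_if_ranked_support:
  fixes rk :: "'a \<Rightarrow> nat"
  assumes "inj_on lbl P"
    and "\<forall>p\<in>I. \<exists>r\<in>P. sat_body I r \<and> hd r = {p} \<and> (\<forall>q\<in>pos r. rk q < rk p)"
  shows "\<exists>E lam. explanation P I E lam"
proof -
  obtain rp where rp: "\<forall>p\<in>I. rp p \<in> P \<and> sat_body I (rp p) \<and> hd (rp p) = {p} \<and>
      (\<forall>q\<in>pos (rp p). rk q < rk p)"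
    using bchoice[OF assms(2)[unfolded Bex_def]] by blast
  define E where "E = {(q, p). p \<in> I \<and> q \<in> pos (rp p)}"
  have "inj_on (lbl \<circ> rp) I"
  proof (rule inj_onI)
    fix p p' assume "p \<in> I" "p' \<in> I" "(lbl \<circ> rp) p = (lbl \<circ> rp) p'"
    then have "rp p = rp p'"
      using assms(1) rp by (auto dest: inj_onD)
    with rp \<open>p \<in> I\<close> \<open>p' \<in> I\<close> show "p = p'"
      by (metis singleton_inject)
  qed
  then have "support_graph P I E (lbl \<circ> rp)"
    unfolding support_graph_def
  proof (intro conjI ballI)
    fix p assume "p \<in> I"
    with rp show "\<exists>r\<in>P. lbl r = (lbl \<circ> rp) p \<and> r \<in> Sup_rules I P p \<and> pos r = {q. (q, p) \<in> E}"
      by (intro bexI[of _ "rp p"]) (auto simp: Sup_rules_def E_def)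
  qed (use rp in \<open>auto simp: E_def sat_body_def\<close>)
  moreover have "acyclic E"
  proof (rule wf_acyclic, rule wf_subset)
    show "E \<subseteq> inv_image less_than rk"
      using rp unfolding E_def by auto
  qed simp
  ultimately show ?thesis
    unfolding explanation_def by blast
qed

lemma stable_model_imp_justified_model:
  fixes P :: "('a::finite, 'l) lrule set"
  assumes "labelled_program P" "non_disjunctive P" "stable_model P I"
  shows "justified_model P I"
proof -
  obtain rk :: "'a \<Rightarrow> nat"
    where "\<forall>p\<in>I. \<exists>r\<in>P. sat_body I r \<and> hd r = {p} \<and> (\<forall>q\<in>pos r. rk q < rk p)"
    using stable_model_ranked_support[OF assms(2,3)] by blast
  then have "\<exists>E lam. explanation P I E lam"
    using explanation_if_ranked_support assms(1) unfolding labelled_program_def by blast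
  moreover have "is_model P I"
    using assms(3) is_model_reduct_self_iff unfolding stable_model_def by blast
  ultimately show ?thesis
    unfolding justified_model_def by blast
qed

theorem theorem2:
  fixes P :: "('a::finite, 'l) lrule set"
  assumes "labelled_program P"
    and "non_disjunctive P"
  shows "SM P = JM P"
  using stable_model_imp_justified_model[OF assms] justified_model_imp_stable_model[OF assms(2)]
  unfolding SM_def JM_def by blast

end
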